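(* For every infinite compact Hausdorff space $K$ there exists a point $p\in K$ such that $C(K,p)=\{f\in C(K):f(p)=0\}$ fails the ball fixed point property.
   Context: $C(K)$ is the real Banach space of continuous functions on $K$ with the sup norm, and $C(K,p)$ carries the restricted norm. A real Banach space $X$ has the ball fixed point property (BFPP) if every nonexpansive map $T\colon B_X\to B_X$ (i.e. $\|Tx-Ty\|\le\|x-y\|$) has a fixed point, where $B_X$ is the closed unit ball. *)

theory Defs
  imports "HOL-Analysis.Analysis"
begin

text \<open>C(K) for compact K: every continuous real function on a compact space is bounded,
  so C(K) with the sup norm is the space of bounded continuous functions.\<close>

definition C_Kp :: "'a::topological_space \<Rightarrow> ('a \<Rightarrow>\<^sub>C real) set" where
  "C_Kp p = {f. apply_bcontfun f p = 0}"

definition ball_fpp :: "'v::real_normed_vector set \<Rightarrow> bool" where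
  "ball_fpp S \<longleftrightarrow>
     (\<forall>T. (\<forall>x\<in>S \<inter> cball 0 1. T x \<in> S \<inter> cball 0 1) \<and>
          (\<forall>x\<in>S \<inter> cball 0 1. \<forall>y\<in>S \<inter> cball 0 1. norm (T x - T y) \<le> norm (x - y))
        \<longrightarrow> (\<exists>x\<in>S \<inter> cball 0 1. T x = x))"

end

theory Submission
  imports Defs
begin

(* Choose a point q that is a limit of distinct points x_n, and Urysohn functions
   h_n : K -> [0,1] with h_n q = 0 and h_n x_n = 1 (for x_n ~= q). Then g = sum 2^-n h_n is
   continuous, nonnegative, vanishes at q and is positive at every x_n ~= q, so q lies in the
   closure of {g > 0}. The map f |-> min 1 (f + g) sends the unit ball of C(K,q) into itself
   and is nonexpansive, but a fixed point f would equal 1 on {g > 0}, hence also at q,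
   contradicting f q = 0. *)

lemma Hausdorff_space_euclidean_t2: "Hausdorff_space (euclidean :: 'a::t2_space topology)"
  unfolding Hausdorff_space_def disjnt_def using hausdorff by fastforce

lemma compact_t2_Urysohn_points:
  fixes x y :: "'a::t2_space"
  assumes "compact (UNIV :: 'a set)" "x \<noteq> y"
  obtains h :: "'a \<Rightarrow> real"
  where "continuous_on UNIV h" "\<And>z. h z \<in> {0..1}" "h x = 0" "h y = 1"
proof -
  have "compact_space (euclidean :: 'a topology)"
    using assms(1) by (simp add: compact_space_def)
  then have "normal_space (euclidean :: 'a topology)"
    using Hausdorff_space_euclidean_t2 compact_Hausdorff_or_regular_imp_normal_space by blast
  then obtain h where h: "continuous_map euclidean (top_of_set {0..1::real}) h"
    "h ` {x} \<subseteq> {0}" "h ` {y} \<subseteq> {1}"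
    by (rule Urysohn_lemma[of _ "{x}" "{y}" 0 1]) (use assms(2) in auto)
  have "continuous_on UNIV h" "h z \<in> {0..1}" for z
    using h(1) by (auto simp: continuous_map_in_subtopology)
  with h(2,3) show thesis
    using that by simp
qed

lemma continuous_on_suminf_Weierstrass:
  fixes h :: "nat \<Rightarrow> 'a::topological_space \<Rightarrow> 'b::banach"
  assumes "\<And>n. continuous_on S (h n)" "\<And>n y. y \<in> S \<Longrightarrow> norm (h n y) \<le> M n" "summable M"
  shows "continuous_on S (\<lambda>y. \<Sum>n. h n y)"
proof (rule uniform_limit_theorem)
  show "uniform_limit S (\<lambda>n y. \<Sum>i<n. h i y) (\<lambda>y. \<Sum>n. h n y) sequentially"
    using assms(2,3) by (rule Weierstrass_m_test)
  show "\<forall>\<^sub>F n in sequentially. continuous_on S (\<lambda>y. \<Sum>i<n. h i y)"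
    using assms(1) by (intro always_eventually allI continuous_on_sum) auto
qed simp

lemma compact_t2_function_positive_on_sequence:
  fixes x :: "nat \<Rightarrow> 'a::t2_space"
  assumes "compact (UNIV :: 'a set)"
  obtains g :: "'a \<Rightarrow> real"
  where "continuous_on UNIV g" "\<And>y. 0 \<le> g y" "g q = 0" "\<And>n. x n \<noteq> q \<Longrightarrow> 0 < g (x n)"
proof -
  have "\<exists>h :: 'a \<Rightarrow> real.
          continuous_on UNIV h \<and> (\<forall>z. h z \<in> {0..1}) \<and> h q = 0 \<and> (y \<noteq> q \<longrightarrow> h y = 1)"
    for y
  proof (cases "y = q")
    case True
    then show ?thesis by (intro exI[of _ "\<lambda>_. 0"]) auto
  next
    case False
    then show ?thesis using compact_t2_Urysohn_points[OF assms, of q y] by metis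
  qed
  then obtain H :: "'a \<Rightarrow> 'a \<Rightarrow> real" where H_cont: "\<And>y. continuous_on UNIV (H y)"
    and H_range: "\<And>y z. H y z \<in> {0..1}" and H_q: "\<And>y. H y q = 0"
    and H_y: "\<And>y. y \<noteq> q \<Longrightarrow> H y y = 1"
    by metis
  define g where "g z = (\<Sum>n. (1/2)^n * H (x n) z)" for z
  have term_bound: "norm ((1/2)^n * H (x n) z) \<le> (1/2::real)^n" for n z
    using H_range[of "x n" z] by (simp add: mult_left_le)
  have term_nonneg: "0 \<le> (1/2::real)^n * H (x n) z" for n z
    using H_range[of "x n" z] by simp
  have summable: "summable (\<lambda>n. (1/2::real)^n * H (x n) z)" for z
    by (rule summable_comparison_test[OF _ summable_geometric[of "1/2"]])
      (use term_bound in auto)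
  show thesis
  proof
    show "continuous_on UNIV g"
      unfolding g_def using H_cont term_bound
      by (intro continuous_on_suminf_Weierstrass[where M = "\<lambda>n. (1/2)^n"] continuous_intros)
        auto
    show "0 \<le> g z" for z
      unfolding g_def using summable term_nonneg by (simp add: suminf_nonneg)
    show "g q = 0"
      unfolding g_def by (simp add: H_q)
    show "0 < g (x n)" if "x n \<noteq> q" for n
      unfolding g_def using summable term_nonneg H_y[OF that]
      by (intro suminf_pos2[where i = n]) auto
  qed
qed

lemma infinite_compact_zero_set_boundary_point:
  assumes "compact (UNIV :: 'a set)" "infinite (UNIV :: 'a set)"
  obtains g :: "'a::t2_space \<Rightarrow> real" and q :: 'a
  where "continuous_on UNIV g" "\<And>y. 0 \<le> g y" "g q = 0" "q \<in> closure {y. 0 < g y}"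
proof -
  obtain x :: "nat \<Rightarrow> 'a" where "inj x"
    using infinite_countable_subset[OF assms(2)] by blast
  then have "infinite (range x)"
    using range_inj_infinite by blast
  then obtain q where q: "q islimpt range x"
    using Heine_Borel_imp_Bolzano_Weierstrass[OF assms(1)] by blast
  obtain g :: "'a \<Rightarrow> real" where g: "continuous_on UNIV g" "\<And>y. 0 \<le> g y" "g q = 0"
    and g_pos: "\<And>n. x n \<noteq> q \<Longrightarrow> 0 < g (x n)"
    using compact_t2_function_positive_on_sequence[OF assms(1)] by metis
  have "range x \<subseteq> insert q {y. 0 < g y}"
    using g_pos by blast
  then have "q islimpt {y. 0 < g y}"
    using islimpt_subset[OF q] islimpt_insert by blast
  then have "q \<in> closure {y. 0 < g y}"
    by (simp add: closure_def)
  with g show thesis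
    using that by blast
qed

definition capped_shift :: "('a::topological_space \<Rightarrow> real) \<Rightarrow> ('a \<Rightarrow>\<^sub>C real) \<Rightarrow> ('a \<Rightarrow>\<^sub>C real)"
  where "capped_shift g f = Bcontfun (\<lambda>y. min 1 (f y + g y))"

lemma apply_capped_shift:
  assumes "continuous_on UNIV g" "\<And>y. 0 \<le> g y"
  shows "capped_shift g f y = min 1 (f y + g y)"
proof -
  have "(\<lambda>y. min 1 (f y + g y)) \<in> bcontfun"
  proof (rule bcontfun_normI)
    show "continuous_on UNIV (\<lambda>y. min 1 (f y + g y))"
      by (intro continuous_intros continuous_on_apply_bcontfun assms(1))
    show "norm (min 1 (f y + g y)) \<le> max 1 (norm f)" for y
      using norm_bounded[of f y] assms(2)[of y] by auto
  qed
  then show ?thesis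
    unfolding capped_shift_def by (simp add: Bcontfun_inverse)
qed

lemma capped_shift_nonexpansive:
  assumes "continuous_on UNIV g" "\<And>y. 0 \<le> g y"
  shows "norm (capped_shift g f - capped_shift g h) \<le> norm (f - h)"
proof (rule norm_bound)
  fix y
  have "norm ((capped_shift g f - capped_shift g h) y)
      = \<bar>min 1 (f y + g y) - min 1 (h y + g y)\<bar>"
    by (simp add: apply_capped_shift[OF assms])
  also have "\<dots> \<le> norm ((f - h) y)"
    by (simp add: min_def abs_if)
  also have "\<dots> \<le> norm (f - h)"
    by (rule norm_bounded)
  finally show "norm ((capped_shift g f - capped_shift g h) y) \<le> norm (f - h)" .
qed

lemma capped_shift_C_Kp_unit_ball:
  assumes "continuous_on UNIV g" "\<And>y. 0 \<le> g y" "g q = 0"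
    and f: "f \<in> C_Kp q \<inter> cball 0 1"
  shows "capped_shift g f \<in> C_Kp q \<inter> cball 0 1"
proof -
  have "f q = 0" "norm f \<le> 1"
    using f by (simp_all add: C_Kp_def)
  moreover have "norm (capped_shift g f) \<le> 1"
  proof (rule norm_bound)
    show "norm (capped_shift g f y) \<le> 1" for y
      using norm_bounded[of f y] \<open>norm f \<le> 1\<close> assms(2)[of y]
      by (auto simp: apply_capped_shift[OF assms(1,2)])
  qed
  ultimately show ?thesis
    by (simp add: C_Kp_def apply_capped_shift[OF assms(1,2)] assms(3))
qed

lemma capped_shift_no_fixed_point:
  assumes "continuous_on UNIV g" "\<And>y. 0 \<le> g y" "q \<in> closure {y. 0 < g y}"
    and "f \<in> C_Kp q"
  shows "capped_shift g f \<noteq> f"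
proof
  assume fixed: "capped_shift g f = f"
  have "{y. 0 < g y} \<subseteq> {y. f y = 1}"
  proof
    fix y assume "y \<in> {y. 0 < g y}"
    moreover have "min 1 (f y + g y) = f y"
      using fixed by (metis apply_capped_shift[OF assms(1,2)])
    ultimately show "y \<in> {y. f y = 1}" by (auto simp: min_def split: if_splits)
  qed
  moreover have "closed {y. f y = 1}"
    by (intro closed_Collect_eq continuous_intros continuous_on_apply_bcontfun)
  ultimately have "f q = 1"
    using closure_minimal assms(3) by blast
  then show False
    using assms(4) by (simp add: C_Kp_def)
qed

lemma not_ball_fpp_C_Kp:
  fixes g :: "'a::topological_space \<Rightarrow> real"
  assumes "continuous_on UNIV g" "\<And>y. 0 \<le> g y" "g q = 0" "q \<in> closure {y. 0 < g y}"
  shows "\<not> ball_fpp (C_Kp q)"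
  unfolding ball_fpp_def not_all
  using capped_shift_C_Kp_unit_ball[OF assms(1-3)] capped_shift_nonexpansive[OF assms(1,2)]
    capped_shift_no_fixed_point[OF assms(1,2,4)]
  by blast

theorem mainTheorem17:
  assumes "compact (UNIV :: 'a::t2_space set)"
    and "infinite (UNIV :: 'a set)"
  shows "\<exists>p::'a. \<not> ball_fpp (C_Kp p)"
proof -
  obtain g :: "'a \<Rightarrow> real" and q
    where "continuous_on UNIV g" "\<And>y. 0 \<le> g y" "g q = 0" "q \<in> closure {y. 0 < g y}"
    using infinite_compact_zero_set_boundary_point[OF assms] by blast
  then show ?thesis
    using not_ball_fpp_C_Kp by blast
qed

end
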